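(* Let $G$ be a finite vertex-transitive simple graph, let $v$ be any vertex of $G$, and let $P$ be a solvable pebble distribution on $G$. Then $$|P|\geq \frac{|V(G)|+\mathrm{TE}(P)}{\mathrm{ef}(v)}.$$
   Context: A pebble distribution on $G$ is a function $P:V(G)\to\mathbb{Z}_{\geq 0}$ with size $|P|=\sum_v P(v)$. A pebbling move from a vertex $u$ with at least two pebbles to an adjacent vertex removes two pebbles from $u$ and adds one to the neighbor. A vertex $w$ is $k$-reachable under $P$ if some executable sequence of pebbling moves yields at least $k$ pebbles on $w$; reachable means $1$-reachable; $P$ is solvable if all vertices are reachable. $\mathrm{reach}(P,w)$ is the largest such $k$. The excess $\mathrm{exc}(P,w)$ is $\mathrm{reach}(P,w)-1$ if $w$ is reachable and $0$ otherwise, and $\mathrm{TE}(P)=\sum_{w}\mathrm{exc}(P,w)$. With $N_i(v)$ the set of vertices at distance exactly $i$ from $v$, $\mathrm{ef}(v)=\sum_{i\geq 0}(1/2)^i|N_i(v)|$ (independent of $v$ for vertex-transitive $G$). *)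

theory Defs
  imports Complex_Main
begin

definition simple_graph :: "'a set \<Rightarrow> ('a \<Rightarrow> 'a \<Rightarrow> bool) \<Rightarrow> bool" where
  "simple_graph V E \<longleftrightarrow> finite V \<and> (\<forall>x y. E x y \<longrightarrow> x \<in> V \<and> y \<in> V)
     \<and> (\<forall>x y. E x y \<longrightarrow> E y x) \<and> (\<forall>x. \<not> E x x)"

definition vertex_transitive :: "'a set \<Rightarrow> ('a \<Rightarrow> 'a \<Rightarrow> bool) \<Rightarrow> bool" where
  "vertex_transitive V E \<longleftrightarrow> (\<forall>u\<in>V. \<forall>w\<in>V. \<exists>f. bij_betw f V V
     \<and> (\<forall>x\<in>V. \<forall>y\<in>V. E x y \<longleftrightarrow> E (f x) (f y)) \<and> f u = w)"

definition distribution :: "'a set \<Rightarrow> ('a \<Rightarrow> nat) \<Rightarrow> bool" where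
  "distribution V P \<longleftrightarrow> (\<forall>x. x \<notin> V \<longrightarrow> P x = 0)"

definition psize :: "'a set \<Rightarrow> ('a \<Rightarrow> nat) \<Rightarrow> nat" where
  "psize V P = (\<Sum>x\<in>V. P x)"

definition pebbling_move :: "('a \<Rightarrow> 'a \<Rightarrow> bool) \<Rightarrow> ('a \<Rightarrow> nat) \<Rightarrow> ('a \<Rightarrow> nat) \<Rightarrow> bool" where
  "pebbling_move E P Q \<longleftrightarrow> (\<exists>u w. E u w \<and> P u \<ge> 2 \<and> Q = (P(u := P u - 2))(w := P w + 1))"

definition k_reachable :: "('a \<Rightarrow> 'a \<Rightarrow> bool) \<Rightarrow> ('a \<Rightarrow> nat) \<Rightarrow> 'a \<Rightarrow> nat \<Rightarrow> bool" where
  "k_reachable E P w k \<longleftrightarrow> (\<exists>Q. (pebbling_move E)\<^sup>*\<^sup>* P Q \<and> Q w \<ge> k)"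

definition reachable_v :: "('a \<Rightarrow> 'a \<Rightarrow> bool) \<Rightarrow> ('a \<Rightarrow> nat) \<Rightarrow> 'a \<Rightarrow> bool" where
  "reachable_v E P w \<longleftrightarrow> k_reachable E P w 1"

definition solvable :: "'a set \<Rightarrow> ('a \<Rightarrow> 'a \<Rightarrow> bool) \<Rightarrow> ('a \<Rightarrow> nat) \<Rightarrow> bool" where
  "solvable V E P \<longleftrightarrow> (\<forall>w\<in>V. reachable_v E P w)"

definition reach :: "('a \<Rightarrow> 'a \<Rightarrow> bool) \<Rightarrow> ('a \<Rightarrow> nat) \<Rightarrow> 'a \<Rightarrow> nat" where
  "reach E P w = (GREATEST k. k_reachable E P w k)"

definition exc :: "('a \<Rightarrow> 'a \<Rightarrow> bool) \<Rightarrow> ('a \<Rightarrow> nat) \<Rightarrow> 'a \<Rightarrow> nat" where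
  "exc E P w = (if reachable_v E P w then reach E P w - 1 else 0)"

definition TE :: "'a set \<Rightarrow> ('a \<Rightarrow> 'a \<Rightarrow> bool) \<Rightarrow> ('a \<Rightarrow> nat) \<Rightarrow> nat" where
  "TE V E P = (\<Sum>w\<in>V. exc E P w)"

definition dist_is :: "('a \<Rightarrow> 'a \<Rightarrow> bool) \<Rightarrow> 'a \<Rightarrow> 'a \<Rightarrow> nat \<Rightarrow> bool" where
  "dist_is E v w i \<longleftrightarrow> (E ^^ i) v w \<and> (\<forall>j<i. \<not> (E ^^ j) v w)"

definition sphere :: "'a set \<Rightarrow> ('a \<Rightarrow> 'a \<Rightarrow> bool) \<Rightarrow> nat \<Rightarrow> 'a \<Rightarrow> 'a set" where
  "sphere V E i v = {w\<in>V. dist_is E v w i}"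

definition ef :: "'a set \<Rightarrow> ('a \<Rightarrow> 'a \<Rightarrow> bool) \<Rightarrow> 'a \<Rightarrow> real" where
  "ef V E v = (\<Sum>i. (1/2) ^ i * real (card (sphere V E i v)))"

end

theory Submission
  imports Defs
begin

text \<open>Give a pebble on u the weight (1/2)^d(u,w) towards a target w. A pebbling move
  from u to a neighbour x trades weight 2 (1/2)^d(u,w) for (1/2)^d(x,w), which is no more
  since d(x,w) \<ge> d(u,w) - 1; so the weighted count of pebbles seen from w never increases,
  and reach(P,w) is at most its initial value. Summing over all targets w, each pebble on u
  contributes ef(u) = ef(v), giving |V| + TE(P) \<le> |P| ef(v).\<close>

definition dist_weight :: "('a \<Rightarrow> 'a \<Rightarrow> bool) \<Rightarrow> 'a \<Rightarrow> 'a \<Rightarrow> real" where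
  "dist_weight E u w = (if \<exists>i. (E ^^ i) u w then (1/2) ^ (LEAST i. (E ^^ i) u w) else 0)"

definition potential :: "'a set \<Rightarrow> ('a \<Rightarrow> 'a \<Rightarrow> bool) \<Rightarrow> 'a \<Rightarrow> ('a \<Rightarrow> nat) \<Rightarrow> real" where
  "potential V E w Q = (\<Sum>u\<in>V. real (Q u) * dist_weight E u w)"

lemma dist_weight_nonneg: "0 \<le> dist_weight E u w"
  by (simp add: dist_weight_def)

lemma dist_weight_le_1: "dist_weight E u w \<le> 1"
  by (simp add: dist_weight_def power_le_one)

lemma dist_weight_self: "dist_weight E w w = 1"
proof -
  have "(E ^^ 0) w w" by simp
  then have "\<exists>i. (E ^^ i) w w" and "(LEAST i. (E ^^ i) w w) = 0"
    by (blast, intro Least_equality) auto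
  then show ?thesis unfolding dist_weight_def by simp
qed

lemma dist_weight_edge:
  assumes "E u x"
  shows "dist_weight E x w \<le> 2 * dist_weight E u w"
proof (cases "\<exists>i. (E ^^ i) x w")
  case True
  define d where "d = (LEAST i. (E ^^ i) x w)"
  have "(E ^^ d) x w" unfolding d_def using True by (rule LeastI_ex)
  then have path: "(E ^^ Suc d) u w" using assms by (rule relpowp_Suc_I2[rotated])
  then have "(1/2::real) ^ Suc d \<le> (1/2) ^ (LEAST i. (E ^^ i) u w)"
    by (intro power_decreasing Least_le) auto
  moreover have "\<exists>i. (E ^^ i) u w" using path by blast
  ultimately show ?thesis using True unfolding dist_weight_def d_def by simp
next
  case False
  then show ?thesis unfolding dist_weight_def by simp
qed

lemma dist_is_iff_Least:
  "dist_is E v w i \<longleftrightarrow> (\<exists>j. (E ^^ j) v w) \<and> i = (LEAST j. (E ^^ j) v w)"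
  unfolding dist_is_def by (metis LeastI Least_le le_neq_implies_less not_less_Least)

lemma sums_dist_weight:
  "(\<lambda>i. (1/2::real) ^ i * (if dist_is E v w i then 1 else 0)) sums dist_weight E v w"
proof (cases "\<exists>j. (E ^^ j) v w")
  case True
  define d where "d = (LEAST j. (E ^^ j) v w)"
  have "(\<lambda>i. (1/2::real) ^ i * (if dist_is E v w i then 1 else 0))
      = (\<lambda>i. if i = d then (1/2) ^ i else 0)"
    using True by (auto simp: dist_is_iff_Least d_def)
  moreover have "dist_weight E v w = (1/2) ^ d"
    using True by (simp add: dist_weight_def d_def)
  ultimately show ?thesis using sums_single[of d "\<lambda>i. (1/2::real) ^ i"] by simp
next
  case False
  then show ?thesis by (simp add: dist_is_iff_Least dist_weight_def)
qed

lemma ef_eq_sum_dist_weight: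
  assumes "finite V"
  shows "ef V E v = (\<Sum>w\<in>V. dist_weight E v w)"
proof -
  have "(1/2) ^ i * real (card (sphere V E i v))
      = (\<Sum>w\<in>V. (1/2::real) ^ i * (if dist_is E v w i then 1 else 0))" for i
    using assms by (simp add: sphere_def sum.If_cases Int_def flip: sum_distrib_left)
  then have "(\<lambda>i. (1/2) ^ i * real (card (sphere V E i v))) sums (\<Sum>w\<in>V. dist_weight E v w)"
    using sums_sum[OF sums_dist_weight] by simp
  then show ?thesis unfolding ef_def by (rule sums_unique[symmetric])
qed

lemma potential_pebbling_move_le:
  assumes "simple_graph V E" and "pebbling_move E Q Q'"
  shows "potential V E w Q' \<le> potential V E w Q"
proof -
  obtain u x where ux: "E u x" "Q u \<ge> 2" "Q' = (Q(u := Q u - 2))(x := Q x + 1)"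
    using assms(2) unfolding pebbling_move_def by blast
  have V: "u \<in> V" "x \<in> V" "u \<noteq> x" "finite V"
    using assms(1) ux(1) unfolding simple_graph_def by metis+
  have Q': "real (Q' y) = real (Q y) - 2 * (if y = u then 1 else 0) + (if y = x then 1 else 0)"
    for y using ux V by (auto simp: of_nat_diff)
  have "potential V E w Q' = (\<Sum>y\<in>V. real (Q y) * dist_weight E y w
      - 2 * (if y = u then dist_weight E y w else 0) + (if y = x then dist_weight E y w else 0))"
    unfolding potential_def Q' by (intro sum.cong) (auto simp: algebra_simps)
  also have "\<dots> = potential V E w Q - 2 * dist_weight E u w + dist_weight E x w"
    using V by (simp add: sum.distrib sum_subtractf potential_def flip: sum_distrib_left)
  also have "\<dots> \<le> potential V E w Q"
    using dist_weight_edge[of E u x w] ux(1) by linarith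
  finally show ?thesis .
qed

lemma potential_pebbling_moves_le:
  assumes "simple_graph V E" and "(pebbling_move E)\<^sup>*\<^sup>* P Q"
  shows "potential V E w Q \<le> potential V E w P"
  using assms(2)
  by (induction rule: rtranclp_induct)
     (auto dest: potential_pebbling_move_le[OF assms(1), of _ _ w])

lemma pebbles_le_potential:
  assumes "finite V" and "w \<in> V"
  shows "real (Q w) \<le> potential V E w Q"
proof -
  have "real (Q w) * dist_weight E w w \<le> (\<Sum>u\<in>V. real (Q u) * dist_weight E u w)"
    using assms by (intro member_le_sum) (auto simp: dist_weight_nonneg)
  then show ?thesis by (simp add: dist_weight_self potential_def)
qed

lemma potential_le_psize: "potential V E w P \<le> real (psize V P)"
  unfolding potential_def psize_def of_nat_sum
  by (intro sum_mono) (simp add: mult_left_le dist_weight_le_1 dist_weight_nonneg)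

lemma k_reachable_le_potential:
  assumes "simple_graph V E" and "w \<in> V" and "k_reachable E P w k"
  shows "real k \<le> potential V E w P"
proof -
  obtain Q where Q: "(pebbling_move E)\<^sup>*\<^sup>* P Q" "k \<le> Q w"
    using assms(3) unfolding k_reachable_def by blast
  have "finite V" using assms(1) by (simp add: simple_graph_def)
  then have "real (Q w) \<le> potential V E w P"
    using pebbles_le_potential[OF _ assms(2)] potential_pebbling_moves_le[OF assms(1) Q(1)]
    by (meson order_trans)
  with Q(2) show ?thesis by linarith
qed

lemma k_reachable_le_psize:
  assumes "simple_graph V E" and "w \<in> V" and "k_reachable E P w k"
  shows "k \<le> psize V P"
  using k_reachable_le_potential[OF assms] potential_le_psize[of V E w P] by linarith

lemma k_reachable_reach:
  assumes "simple_graph V E" and "w \<in> V"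
  shows "k_reachable E P w (reach E P w)"
proof -
  have "k_reachable E P w 0" unfolding k_reachable_def by blast
  then show ?thesis unfolding reach_def
    by (rule GreatestI_nat) (rule k_reachable_le_psize[OF assms])
qed

lemma le_reach:
  assumes "simple_graph V E" and "w \<in> V" and "k_reachable E P w k"
  shows "k \<le> reach E P w"
  unfolding reach_def using assms(3)
  by (rule Greatest_le_nat) (rule k_reachable_le_psize[OF assms(1,2)])

lemma exc_le_potential:
  assumes "simple_graph V E" and "w \<in> V" and "reachable_v E P w"
  shows "1 + real (exc E P w) \<le> potential V E w P"
proof -
  have "1 \<le> reach E P w"
    using le_reach[OF assms(1,2)] assms(3) by (simp add: reachable_v_def)
  then have "1 + real (exc E P w) = real (reach E P w)"
    using assms(3) by (simp add: exc_def of_nat_diff)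
  also have "\<dots> \<le> potential V E w P"
    by (rule k_reachable_le_potential[OF assms(1,2) k_reachable_reach[OF assms(1,2)]])
  finally show ?thesis .
qed

lemma sum_potential_eq_sum_ef:
  assumes "finite V"
  shows "(\<Sum>w\<in>V. potential V E w P) = (\<Sum>u\<in>V. real (P u) * ef V E u)"
  unfolding potential_def ef_eq_sum_dist_weight[OF assms] sum_distrib_left
  by (rule sum.swap)

lemma relpowp_automorphism_iff:
  assumes "\<forall>x y. E x y \<longrightarrow> x \<in> V \<and> y \<in> V" and "bij_betw f V V"
    and "\<forall>x\<in>V. \<forall>y\<in>V. E x y \<longleftrightarrow> E (f x) (f y)"
    and "a \<in> V" and "b \<in> V"
  shows "(E ^^ i) (f a) (f b) \<longleftrightarrow> (E ^^ i) a b"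
  using assms(5)
proof (induction i arbitrary: b)
  case 0
  then show ?case using assms(2,4) by (auto simp: bij_betw_def inj_on_def)
next
  case (Suc i)
  show ?case
  proof
    assume "(E ^^ Suc i) (f a) (f b)"
    then obtain c' where c': "(E ^^ i) (f a) c'" "E c' (f b)" by (auto elim: relpowp_Suc_E)
    then obtain c where "c \<in> V" "c' = f c"
      using assms(1,2) by (metis bij_betw_imp_surj_on imageE)
    with c' Suc assms(3) show "(E ^^ Suc i) a b" by (auto intro: relpowp_Suc_I)
  next
    assume "(E ^^ Suc i) a b"
    then obtain c where c: "(E ^^ i) a c" "E c b" by (auto elim: relpowp_Suc_E)
    then have "c \<in> V" using assms(1) by blast
    with c Suc assms(3) show "(E ^^ Suc i) (f a) (f b)" by (auto intro: relpowp_Suc_I)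
  qed
qed

lemma ef_vertex_transitive:
  assumes "simple_graph V E" and "vertex_transitive V E" and "u \<in> V" and "v \<in> V"
  shows "ef V E u = ef V E v"
proof -
  obtain f where f: "bij_betw f V V" "\<forall>x\<in>V. \<forall>y\<in>V. E x y \<longleftrightarrow> E (f x) (f y)" "f v = u"
    using assms(2-4) unfolding vertex_transitive_def by blast
  have V: "finite V" "\<forall>x y. E x y \<longrightarrow> x \<in> V \<and> y \<in> V"
    using assms(1) by (auto simp: simple_graph_def)
  have "dist_weight E u (f w) = dist_weight E v w" if "w \<in> V" for w
    using relpowp_automorphism_iff[OF V(2) f(1,2) assms(4) that] f(3)
    by (simp add: dist_weight_def)
  then have "(\<Sum>w\<in>V. dist_weight E u (f w)) = (\<Sum>w\<in>V. dist_weight E v w)"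
    by (rule sum.cong[OF refl])
  then show ?thesis
    using sum.reindex_bij_betw[OF f(1), of "dist_weight E u"]
    by (simp add: ef_eq_sum_dist_weight[OF V(1)])
qed

lemma one_le_ef:
  assumes "finite V" and "v \<in> V"
  shows "1 \<le> ef V E v"
proof -
  have "dist_weight E v v \<le> (\<Sum>w\<in>V. dist_weight E v w)"
    using assms by (intro member_le_sum) (auto simp: dist_weight_nonneg)
  then show ?thesis by (simp add: ef_eq_sum_dist_weight[OF assms(1)] dist_weight_self)
qed

theorem corollary2p2:
  fixes V :: "'a set" and E :: "'a \<Rightarrow> 'a \<Rightarrow> bool" and P :: "'a \<Rightarrow> nat" and v :: 'a
  assumes "simple_graph V E" and "vertex_transitive V E" and "v \<in> V"
    and "distribution V P" and "solvable V E P"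
  shows "real (psize V P) \<ge> (real (card V) + real (TE V E P)) / ef V E v"
proof -
  have fin: "finite V" using assms(1) by (simp add: simple_graph_def)
  have "real (card V) + real (TE V E P) = (\<Sum>w\<in>V. 1 + real (exc E P w))"
    by (simp add: TE_def sum.distrib)
  also have "\<dots> \<le> (\<Sum>w\<in>V. potential V E w P)"
    using assms(5) by (intro sum_mono exc_le_potential[OF assms(1)]) (auto simp: solvable_def)
  also have "\<dots> = (\<Sum>u\<in>V. real (P u) * ef V E v)"
    using ef_vertex_transitive[OF assms(1,2) _ assms(3)]
    by (simp add: sum_potential_eq_sum_ef[OF fin])
  also have "\<dots> = real (psize V P) * ef V E v"
    by (simp add: psize_def sum_distrib_right)
  finally show ?thesis
    using one_le_ef[OF fin assms(3), of E] by (simp add: divide_le_eq)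
qed

end
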